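(* Let $\{W_i\}_{i=1}^M$ be subspaces of $\mathbb{R}^N$ such that $\sum_{i=1}^M\dim(W_i)=N$. Then $\{W_i\}_{i=1}^M$ does norm retrieval if and only if the subspaces $W_i$ are pairwise orthogonal.
   Context: A family of subspaces $\{W_i\}_{i=1}^M$ of $\mathbb{R}^N$ with orthogonal projections $\{P_i\}_{i=1}^M$ does norm retrieval if for all $x,y\in\mathbb{R}^N$, $\|P_ix\|=\|P_iy\|$ for all $i$ implies $\|x\|=\|y\|$. *)

theory Defs
  imports "HOL-Analysis.Analysis"
begin

definition orth_proj :: "'a::euclidean_space set \<Rightarrow> 'a \<Rightarrow> 'a" where
  "orth_proj W x = (THE y. y \<in> W \<and> (\<forall>w\<in>W. orthogonal (x - y) w))"

definition norm_retrieval :: "nat \<Rightarrow> (nat \<Rightarrow> 'a::euclidean_space set) \<Rightarrow> bool" where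
  "norm_retrieval M W \<longleftrightarrow>
     (\<forall>x y. (\<forall>i<M. norm (orth_proj (W i) x) = norm (orth_proj (W i) y)) \<longrightarrow> norm x = norm y)"

end

theory Submission
  imports Defs
begin

text \<open>If the projections determine the norm, then every y orthogonal to all W k with k \<noteq> i
  already lies in W i: for p = P_i y the vector x = 2y - p has the same projections as p up to
  sign, while |x|^2 = 4 |y - p|^2 + |p|^2. Hence the orthogonal complement of the sum
  of the other subspaces is contained in W i, and when the dimensions add up to at most N
  that complement is too large to be a proper subspace, so W i equals it. Conversely, pairwise
  orthogonal subspaces with total dimension N span the space, so x = \<Sum> P_i x and Pythagoras
  gives |x|^2 = \<Sum> |P_i x|^2.\<close>

lemma orth_proj_eqI:
  fixes W :: "'a::euclidean_space set"
  assumes "subspace W" "y \<in> W" "\<And>w. w \<in> W \<Longrightarrow> orthogonal (x - y) w"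
  shows "orth_proj W x = y"
  unfolding orth_proj_def
proof (rule the_equality)
  show "y \<in> W \<and> (\<forall>w\<in>W. orthogonal (x - y) w)" using assms by blast
next
  fix y' assume y': "y' \<in> W \<and> (\<forall>w\<in>W. orthogonal (x - y') w)"
  have "y' - y \<in> W" using y' assms subspace_diff by blast
  then have "orthogonal (x - y) (y' - y)" "orthogonal (x - y') (y' - y)"
    using y' assms(3) by auto
  then have "orthogonal ((x - y) - (x - y')) (y' - y)"
    by (simp add: orthogonal_def inner_diff_left)
  then show "y' = y" by (simp add: orthogonal_self)
qed

lemma orth_proj_in_orthogonal:
  fixes W :: "'a::euclidean_space set"
  assumes "subspace W"
  shows "orth_proj W x \<in> W" "\<And>w. w \<in> W \<Longrightarrow> orthogonal (x - orth_proj W x) w"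
proof -
  obtain y z where "y \<in> span W" "\<And>w. w \<in> span W \<Longrightarrow> orthogonal z w" "x = y + z"
    using orthogonal_subspace_decomp_exists by blast
  moreover have "span W = W" using assms by (simp add: span_eq_iff)
  ultimately have y: "y \<in> W" "\<And>w. w \<in> W \<Longrightarrow> orthogonal (x - y) w" by simp_all
  with orth_proj_eqI[OF assms] have "orth_proj W x = y" by blast
  with y show "orth_proj W x \<in> W" "\<And>w. w \<in> W \<Longrightarrow> orthogonal (x - orth_proj W x) w" by auto
qed

lemma orth_proj_self:
  fixes W :: "'a::euclidean_space set"
  assumes "subspace W" "x \<in> W"
  shows "orth_proj W x = x"
  using assms by (simp add: orth_proj_eqI orthogonal_clauses)

lemma orth_proj_eq_0:
  fixes W :: "'a::euclidean_space set"
  assumes "subspace W" "\<And>w. w \<in> W \<Longrightarrow> orthogonal x w"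
  shows "orth_proj W x = 0"
  using assms by (simp add: orth_proj_eqI subspace_0)

lemma linear_orth_proj:
  fixes W :: "'a::euclidean_space set"
  assumes W: "subspace W"
  shows "linear (orth_proj W)"
proof (rule linearI)
  note P = orth_proj_in_orthogonal[OF W]
  show "orth_proj W (x + y) = orth_proj W x + orth_proj W y" for x y
  proof (rule orth_proj_eqI[OF W])
    show "orth_proj W x + orth_proj W y \<in> W" using P W by (simp add: subspace_add)
    fix w assume "w \<in> W"
    then have "orthogonal ((x - orth_proj W x) + (y - orth_proj W y)) w"
      using P by (simp add: orthogonal_clauses)
    then show "orthogonal (x + y - (orth_proj W x + orth_proj W y)) w"
      by (simp add: algebra_simps)
  qed
  show "orth_proj W (c *\<^sub>R x) = c *\<^sub>R orth_proj W x" for c x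
  proof (rule orth_proj_eqI[OF W])
    show "c *\<^sub>R orth_proj W x \<in> W" using P W by (simp add: subspace_scale)
    fix w assume "w \<in> W"
    then have "orthogonal (c *\<^sub>R (x - orth_proj W x)) w"
      using P by (simp add: orthogonal_clauses)
    then show "orthogonal (c *\<^sub>R x - c *\<^sub>R orth_proj W x) w"
      by (simp add: algebra_simps)
  qed
qed

lemma dim_Un_le:
  fixes A B :: "'a::euclidean_space set"
  shows "dim (A \<union> B) \<le> dim A + dim B"
proof -
  have "dim (A \<union> B) = dim (span (A \<union> B))" by (rule dim_span[symmetric])
  also have "span (A \<union> B) = {x + y |x y. x \<in> span A \<and> y \<in> span B}" by (rule span_Un)
  finally have "dim (A \<union> B) + dim (span A \<inter> span B) = dim (span A) + dim (span B)"
    using dim_sums_Int[OF subspace_span subspace_span, of A B] by (rule ssubst)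
  then show ?thesis by simp
qed

lemma dim_UN_le:
  fixes W :: "'i \<Rightarrow> 'a::euclidean_space set"
  assumes "finite I"
  shows "dim (\<Union>i\<in>I. W i) \<le> (\<Sum>i\<in>I. dim (W i))"
  using assms
proof (induction I rule: finite_induct)
  case (insert a I)
  have "dim (\<Union>i\<in>insert a I. W i) \<le> dim (W a) + dim (\<Union>i\<in>I. W i)"
    using dim_Un_le[of "W a"] by simp
  with insert show ?case by simp
qed simp

lemma dim_UN_orthogonal:
  fixes W :: "'i \<Rightarrow> 'a::euclidean_space set"
  assumes "finite I"
    and "\<And>i j u v. i \<in> I \<Longrightarrow> j \<in> I \<Longrightarrow> i \<noteq> j \<Longrightarrow> u \<in> W i \<Longrightarrow> v \<in> W j \<Longrightarrow> orthogonal u v"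
  shows "dim (\<Union>i\<in>I. W i) = (\<Sum>i\<in>I. dim (W i))"
  using assms
proof (induction I rule: finite_induct)
  case (insert a I)
  have "u \<bullet> v = 0" if u: "u \<in> W a" and v: "v \<in> (\<Union>i\<in>I. W i)" for u v
  proof -
    obtain i where "i \<in> I" "v \<in> W i" using v by blast
    moreover have "a \<noteq> i" using \<open>i \<in> I\<close> insert.hyps(2) by blast
    ultimately show ?thesis
      using insert.prems[of a i u v] u by (simp add: orthogonal_def)
  qed
  then have "dim (W a \<union> (\<Union>i\<in>I. W i)) = dim (W a) + dim (\<Union>i\<in>I. W i)"
    by (rule dim_orthogonal_sum)
  moreover have "dim (\<Union>i\<in>I. W i) = (\<Sum>i\<in>I. dim (W i))"
    using insert.IH insert.prems by (meson insertI2)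
  ultimately show ?case using insert.hyps by simp
qed simp

lemma norm_retrieval_mem_if_orthogonal_to_others:
  fixes W :: "nat \<Rightarrow> 'a::euclidean_space set"
  assumes sub: "\<And>k. k < M \<Longrightarrow> subspace (W k)" and nr: "norm_retrieval M W" and "i < M"
    and y: "\<And>k w. k < M \<Longrightarrow> k \<noteq> i \<Longrightarrow> w \<in> W k \<Longrightarrow> orthogonal y w"
  shows "y \<in> W i"
proof -
  define p where "p = orth_proj (W i) y"
  define x where "x = 2 *\<^sub>R y - p"
  have p: "p \<in> W i" "orthogonal (y - p) p"
    using orth_proj_in_orthogonal[OF sub[OF \<open>i < M\<close>]] unfolding p_def by auto
  have "norm (orth_proj (W k) x) = norm (orth_proj (W k) p)" if k: "k < M" for k
  proof -
    have "orth_proj (W k) x = 2 *\<^sub>R orth_proj (W k) y - orth_proj (W k) p"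
      unfolding x_def using linear_orth_proj[OF sub[OF k]] by (simp only: linear_diff linear_cmul)
    moreover have "orth_proj (W k) y = (if k = i then p else 0)"
      using sub[OF k] y[OF k] by (simp add: p_def orth_proj_eq_0)
    moreover have "orth_proj (W i) p = p" using sub[OF \<open>i < M\<close>] p(1) by (rule orth_proj_self)
    ultimately show ?thesis by (simp add: scaleR_2)
  qed
  then have "norm x = norm p" by (rule nr[unfolded norm_retrieval_def, rule_format])
  moreover have "(norm x)\<^sup>2 = (norm (2 *\<^sub>R (y - p)))\<^sup>2 + (norm p)\<^sup>2"
  proof -
    have "x = 2 *\<^sub>R (y - p) + p" unfolding x_def by (simp add: algebra_simps scaleR_2)
    moreover have "orthogonal (2 *\<^sub>R (y - p)) p" using p(2) by simp
    ultimately show ?thesis by (metis norm_add_Pythagorean)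
  qed
  ultimately have "y = p" by simp
  with p show ?thesis by simp
qed

lemma norm_retrieval_imp_orthogonal:
  fixes W :: "nat \<Rightarrow> 'a::euclidean_space set"
  assumes sub: "\<And>k. k < M \<Longrightarrow> subspace (W k)" and dim: "(\<Sum>k<M. dim (W k)) \<le> DIM('a)"
    and nr: "norm_retrieval M W"
    and ij: "i < M" "j < M" "i \<noteq> j" and u: "u \<in> W i" and v: "v \<in> W j"
  shows "orthogonal u v"
proof -
  define U where "U = (\<Union>k\<in>{..<M} - {i}. W k)"
  define C where "C = {y. \<forall>x\<in>span U. orthogonal x y}"
  have "C \<subseteq> W i"
  proof
    fix y assume "y \<in> C"
    then have "orthogonal y w" if "k < M" "k \<noteq> i" "w \<in> W k" for k w
      using that unfolding C_def U_def by (auto simp: orthogonal_commute intro: span_base)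
    then show "y \<in> W i" using norm_retrieval_mem_if_orthogonal_to_others[OF sub nr ij(1)] by blast
  qed
  moreover have "dim (W i) \<le> dim C"
  proof -
    have "dim C + dim U = DIM('a)"
      using dim_subspace_orthogonal_to_vectors[of "span U" UNIV] unfolding C_def by simp
    moreover have "dim U \<le> (\<Sum>k\<in>{..<M} - {i}. dim (W k))"
      unfolding U_def by (rule dim_UN_le) simp
    moreover have "(\<Sum>k<M. dim (W k)) = dim (W i) + (\<Sum>k\<in>{..<M} - {i}. dim (W k))"
      using ij by (simp add: sum.remove)
    ultimately show ?thesis using dim by linarith
  qed
  ultimately have "C = W i"
    using subspace_dim_equal[OF _ sub[OF ij(1)]] subspace_orthogonal_to_vectors unfolding C_def by blast
  with u have "u \<in> C" by simp
  moreover have "v \<in> span U" unfolding U_def using v ij by (intro span_base) blast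
  ultimately show ?thesis unfolding C_def using orthogonal_commute by blast
qed

lemma sum_orth_proj_eq_self:
  fixes W :: "nat \<Rightarrow> 'a::euclidean_space set"
  assumes sub: "\<And>k. k < M \<Longrightarrow> subspace (W k)"
    and orth: "\<And>i j u v. i < M \<Longrightarrow> j < M \<Longrightarrow> i \<noteq> j \<Longrightarrow> u \<in> W i \<Longrightarrow> v \<in> W j \<Longrightarrow> orthogonal u v"
    and span: "span (\<Union>k<M. W k) = UNIV"
  shows "(\<Sum>k<M. orth_proj (W k) x) = x"
proof -
  define r where "r = x - (\<Sum>k<M. orth_proj (W k) x)"
  note P = orth_proj_in_orthogonal[OF sub]
  have "r \<bullet> w = 0" if j: "j < M" and w: "w \<in> W j" for j w
  proof -
    have "orth_proj (W k) x \<bullet> w = 0" if "k \<in> {..<M} - {j}" for k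
      using orth[of k j, OF _ j _ P(1) w] that by (simp add: orthogonal_def)
    then have "(\<Sum>k\<in>{..<M} - {j}. orth_proj (W k) x \<bullet> w) = 0" by simp
    moreover have "(\<Sum>k<M. orth_proj (W k) x \<bullet> w)
        = orth_proj (W j) x \<bullet> w + (\<Sum>k\<in>{..<M} - {j}. orth_proj (W k) x \<bullet> w)"
      by (rule sum.remove) (use j in auto)
    ultimately have "r \<bullet> w = (x - orth_proj (W j) x) \<bullet> w"
      by (simp add: r_def inner_diff_left inner_sum_left)
    then show ?thesis using P j w by (simp add: orthogonal_def)
  qed
  then have "orthogonal r r"
    using orthogonal_to_span[of r "\<Union>k<M. W k" r] span unfolding orthogonal_def by blast
  then show ?thesis by (simp add: orthogonal_self r_def)
qed

lemma orthogonal_spanning_imp_norm_retrieval: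
  fixes W :: "nat \<Rightarrow> 'a::euclidean_space set"
  assumes sub: "\<And>k. k < M \<Longrightarrow> subspace (W k)"
    and orth: "\<And>i j u v. i < M \<Longrightarrow> j < M \<Longrightarrow> i \<noteq> j \<Longrightarrow> u \<in> W i \<Longrightarrow> v \<in> W j \<Longrightarrow> orthogonal u v"
    and span: "span (\<Union>k<M. W k) = UNIV"
  shows "norm_retrieval M W"
proof -
  note P = orth_proj_in_orthogonal[OF sub]
  have norm_eq: "(norm x)\<^sup>2 = (\<Sum>k<M. (norm (orth_proj (W k) x))\<^sup>2)" for x
  proof -
    have "(norm x)\<^sup>2 = (norm (\<Sum>k<M. orth_proj (W k) x))\<^sup>2"
      using sum_orth_proj_eq_self[OF sub orth span] by simp
    also have "\<dots> = (\<Sum>k<M. (norm (orth_proj (W k) x))\<^sup>2)"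
      by (rule norm_sum_Pythagorean) (auto simp: pairwise_def intro!: orth[OF _ _ _ P(1) P(1)])
    finally show ?thesis .
  qed
  show ?thesis unfolding norm_retrieval_def
  proof (intro allI impI)
    fix x y :: 'a
    assume "\<forall>k<M. norm (orth_proj (W k) x) = norm (orth_proj (W k) y)"
    then have "(\<Sum>k<M. (norm (orth_proj (W k) x))\<^sup>2) = (\<Sum>k<M. (norm (orth_proj (W k) y))\<^sup>2)"
      by simp
    then have "(norm x)\<^sup>2 = (norm y)\<^sup>2" using norm_eq[of x] norm_eq[of y] by linarith
    then show "norm x = norm y" by (simp add: power2_eq_iff_nonneg)
  qed
qed

theorem mainTheorem8:
  fixes W :: "nat \<Rightarrow> 'a::euclidean_space set" and M :: nat
  assumes "\<forall>i<M. subspace (W i)"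
    and "(\<Sum>i<M. dim (W i)) = DIM('a)"
  shows "norm_retrieval M W \<longleftrightarrow>
    (\<forall>i<M. \<forall>j<M. i \<noteq> j \<longrightarrow> (\<forall>u\<in>W i. \<forall>v\<in>W j. orthogonal u v))"
proof -
  have sub: "\<And>i. i < M \<Longrightarrow> subspace (W i)" using assms(1) by blast
  show ?thesis
  proof
    assume "norm_retrieval M W"
    then show "\<forall>i<M. \<forall>j<M. i \<noteq> j \<longrightarrow> (\<forall>u\<in>W i. \<forall>v\<in>W j. orthogonal u v)"
      using norm_retrieval_imp_orthogonal[OF sub eq_imp_le[OF assms(2)]] by blast
  next
    assume orth: "\<forall>i<M. \<forall>j<M. i \<noteq> j \<longrightarrow> (\<forall>u\<in>W i. \<forall>v\<in>W j. orthogonal u v)"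
    then have "dim (\<Union>k<M. W k) = DIM('a)"
      using dim_UN_orthogonal[of "{..<M}" W] assms(2) by simp
    then have span: "span (\<Union>k<M. W k) = UNIV" by (simp add: dim_eq_full)
    show "norm_retrieval M W"
      using orthogonal_spanning_imp_norm_retrieval[OF sub _ span] orth by blast
  qed
qed

end
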